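(* Let $\mathcal{S}$ be a stratified staged tree for variables $X_1,\dots,X_n$ with $|\mathbb{X}_i|=r_i$, in which every stage consists of situations at a single level, and let $\alpha>0$. Then for every stage $u$ and every $k$, the CS-BDeu hyperparameter of the $k$-th edge of $u$ equals the BDepu hyperparameter of the $k$-th edge of $u$; explicitly, for a stage $u$ with $h$ situations at level $i-1$ (i.e. representing $X_i$), both equal $\alpha h/\prod_{t=1}^{i}r_t$, and both stage totals equal $\alpha h/\prod_{t=1}^{i-1}r_t$. Consequently $\mathrm{CS\text{-}BDeu}(\mathcal{S},\mathcal{D};\alpha)=\mathrm{BDepu}(\mathcal{S},\mathcal{D};\alpha)$ for every complete data sample $\mathcal{D}$.
   Context: An event tree is a finite directed rooted tree with edges directed away from the root; leaves have no outgoing edges, other nodes are situations; the level of a node is its distance (number of edges) from the root. A staged tree is an event tree with a partition of its situations into stages, situations in a common stage having the same number of outgoing edges, labelled consistently, with the $k$-th edges sharing a transition probability. For variables $X_1,\dots,X_n$ with finite state spaces $\mathbb{X}_i$, an event tree is $\mathcal{X}$-compatible if its nodes are the root $v_0$ together with one node $v(x_1,\dots,x_k)$ for each $(x_1,\dots,x_k)\in\mathbb{X}_1\times\dots\times\mathbb{X}_k$, $1\le k\le n$, with edges $v(x_1,\dots,x_{k-1})\to v(x_1,\dots,x_k)$ (and $v_0\to v(x_1)$); a staged tree is stratified if its event tree is $\mathcal{X}$-compatible for some such $\mathcal{X}$. Data: a complete sample $\mathcal{D}$ gives counts $n_{jk}$ of units passing through the $k$-th edge of some situation in stage $u_j$,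 $\overline n_j=\sum_k n_{jk}$. For hyperparameters $\alpha_{jk}$ with $\overline\alpha_j=\sum_k\alpha_{jk}$ the BD-metric is $\prod_j\big[\Gamma(\overline\alpha_j)/\Gamma(\overline\alpha_j+\overline n_j)\prod_k\Gamma(\alpha_{jk}+n_{jk})/\Gamma(\alpha_{jk})\big]$. BDepu: $\alpha_{jk}=\frac{\alpha}{|\Lambda(\mathcal{S})|}\sum_{m=1}^{h_j}|\Lambda(e^m_{jk})|$, where $\Lambda(\mathcal{S})$ is the set of root-to-leaf paths, $\Lambda(e)$ the set of those containing edge $e$, $h_j$ the number of situations in $u_j$, $e^m_{jk}$ the $k$-th edge of its $m$-th situation. CS-BDeu: hyperparameters are propagated forward from the root. The root stage has $\dot\alpha=\alpha$. For a stage $u_{ij}$ at level $i-1$ with $h_{ij}$ situations and $r_{ij}$ outgoing edges per situation, $\dot\alpha_{ij}$ is the sum of the (individual) hyperparameters of the $h_{ij}$ edges entering its situations, the stage edge hyperparameters are $\alpha_{ijk}=\dot\alpha_{ij}/r_{ij}$, and each individual edge emanating from a situation of $u_{ij}$ along label $k$ receives hyperparameter $\alpha_{ijk}/h_{ij}$. The CS-BDeu score is the BD-metric with these stage hyperparameters $\alpha_{ijk}$ (and $\overline\alpha_{ij}=\dot\alpha_{ij}$). *)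

theory Defs
  imports "HOL-Analysis.Analysis" "HOL-Library.Sublist"
begin

text \<open>Stratified event tree for variables X_1,...,X_n (0-indexed here: variable X_(i+1)
  has state space {0..<r i}). A node v(x_1,...,x_k) is the list [x_1,...,x_k]; the root
  is the empty list. The k-th edge of a situation xs is the edge xs -> xs @ [k].\<close>

definition nodes :: "(nat \<Rightarrow> nat) \<Rightarrow> nat \<Rightarrow> nat list set" where
  "nodes r n = {xs. length xs \<le> n \<and> (\<forall>j<length xs. xs ! j < r j)}"

definition situations :: "(nat \<Rightarrow> nat) \<Rightarrow> nat \<Rightarrow> nat list set" where
  "situations r n = {xs \<in> nodes r n. \<exists>k. xs @ [k] \<in> nodes r n}"

definition leaves :: "(nat \<Rightarrow> nat) \<Rightarrow> nat \<Rightarrow> nat list set" where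
  "leaves r n = nodes r n - situations r n"

text \<open>Root-to-leaf paths are identified with their leaves; the paths through the edge
  entering node ys are the leaves having ys as a prefix.\<close>

definition npaths_through :: "(nat \<Rightarrow> nat) \<Rightarrow> nat \<Rightarrow> nat list \<Rightarrow> nat" where
  "npaths_through r n ys = card {l \<in> leaves r n. prefix ys l}"

text \<open>Staging: a labelling st of situations; stages are the classes of equal label.\<close>

definition stage_of :: "(nat \<Rightarrow> nat) \<Rightarrow> nat \<Rightarrow> (nat list \<Rightarrow> 's) \<Rightarrow> nat list \<Rightarrow> nat list set" where
  "stage_of r n st xs = {s \<in> situations r n. st s = st xs}"

definition stages :: "(nat \<Rightarrow> nat) \<Rightarrow> nat \<Rightarrow> (nat list \<Rightarrow> 's) \<Rightarrow> nat list set set" where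
  "stages r n st = stage_of r n st ` situations r n"

definition stage_labels :: "(nat \<Rightarrow> nat) \<Rightarrow> nat \<Rightarrow> nat list set \<Rightarrow> nat set" where
  "stage_labels r n U = {k. \<exists>s\<in>U. s @ [k] \<in> nodes r n}"

definition single_level_stages :: "(nat \<Rightarrow> nat) \<Rightarrow> nat \<Rightarrow> (nat list \<Rightarrow> 's) \<Rightarrow> bool" where
  "single_level_stages r n st =
     (\<forall>s\<in>situations r n. \<forall>t\<in>situations r n. st s = st t \<longrightarrow> length s = length t)"

definition bdepu_hyp :: "real \<Rightarrow> (nat \<Rightarrow> nat) \<Rightarrow> nat \<Rightarrow> nat list set \<Rightarrow> nat \<Rightarrow> real" where
  "bdepu_hyp \<alpha> r n U k =
     \<alpha> / real (card (leaves r n)) * (\<Sum>s\<in>U. real (npaths_through r n (s @ [k])))"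

text \<open>CS-BDeu: forward propagation. cs_lvl ... i ys is the individual hyperparameter of
  the edge entering node ys (of length i); for the root (i = 0) it is alpha, so that the
  root stage gets total alpha.\<close>

fun cs_lvl :: "real \<Rightarrow> (nat \<Rightarrow> nat) \<Rightarrow> nat \<Rightarrow> (nat list \<Rightarrow> 's) \<Rightarrow> nat \<Rightarrow> nat list \<Rightarrow> real" where
  "cs_lvl \<alpha> r n st 0 ys = \<alpha>"
| "cs_lvl \<alpha> r n st (Suc i) ys =
     (let U = stage_of r n st (butlast ys)
      in (\<Sum>s\<in>U. cs_lvl \<alpha> r n st i s) / real (card (stage_labels r n U)) / real (card U))"

definition cs_in :: "real \<Rightarrow> (nat \<Rightarrow> nat) \<Rightarrow> nat \<Rightarrow> (nat list \<Rightarrow> 's) \<Rightarrow> nat list \<Rightarrow> real" where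
  "cs_in \<alpha> r n st ys = cs_lvl \<alpha> r n st (length ys) ys"

definition cs_dot :: "real \<Rightarrow> (nat \<Rightarrow> nat) \<Rightarrow> nat \<Rightarrow> (nat list \<Rightarrow> 's) \<Rightarrow> nat list set \<Rightarrow> real" where
  "cs_dot \<alpha> r n st U = (\<Sum>s\<in>U. cs_in \<alpha> r n st s)"

definition cs_hyp :: "real \<Rightarrow> (nat \<Rightarrow> nat) \<Rightarrow> nat \<Rightarrow> (nat list \<Rightarrow> 's) \<Rightarrow> nat list set \<Rightarrow> nat \<Rightarrow> real" where
  "cs_hyp \<alpha> r n st U k = cs_dot \<alpha> r n st U / real (card (stage_labels r n U))"

text \<open>Data: a complete sample is a list of units, each a full assignment (a leaf).
  n_jk = number of units passing through the k-th edge of some situation of stage U.\<close>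

definition stage_count :: "nat list list \<Rightarrow> nat list set \<Rightarrow> nat \<Rightarrow> nat" where
  "stage_count D U k = (\<Sum>s\<in>U. length (filter (prefix (s @ [k])) D))"

definition bd_metric ::
  "nat list set set \<Rightarrow> (nat list set \<Rightarrow> nat set) \<Rightarrow> (nat list set \<Rightarrow> nat \<Rightarrow> real)
     \<Rightarrow> (nat list set \<Rightarrow> nat \<Rightarrow> nat) \<Rightarrow> real" where
  "bd_metric Us labs a cnt =
     (\<Prod>U\<in>Us. Gamma (\<Sum>k\<in>labs U. a U k)
               / Gamma ((\<Sum>k\<in>labs U. a U k) + (\<Sum>k\<in>labs U. real (cnt U k)))
               * (\<Prod>k\<in>labs U. Gamma (a U k + real (cnt U k)) / Gamma (a U k)))"

definition bdepu_score :: "real \<Rightarrow> (nat \<Rightarrow> nat) \<Rightarrow> nat \<Rightarrow> (nat list \<Rightarrow> 's) \<Rightarrow> nat list list \<Rightarrow> real" where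
  "bdepu_score \<alpha> r n st D =
     bd_metric (stages r n st) (stage_labels r n) (bdepu_hyp \<alpha> r n) (stage_count D)"

definition cs_bdeu_score :: "real \<Rightarrow> (nat \<Rightarrow> nat) \<Rightarrow> nat \<Rightarrow> (nat list \<Rightarrow> 's) \<Rightarrow> nat list list \<Rightarrow> real" where
  "cs_bdeu_score \<alpha> r n st D =
     bd_metric (stages r n st) (stage_labels r n) (cs_hyp \<alpha> r n st) (stage_count D)"

end

theory Submission
  imports Defs
begin

(* Since every stage lies on a single level, forward propagation gives every edge entering a
   node at depth i the same CS-BDeu hyperparameter alpha / (r_0 ... r_(i-1)): a stage of h
   situations at depth i collects h times that amount and splits it evenly over its r_i labels
   and its h situations. On the BDepu side, in a stratified tree the root-to-leaf paths through
   an edge entering depth i+1 form the fraction 1 / (r_0 ... r_i) of all paths, so summing over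
   the h situations of a stage gives the same value alpha h / (r_0 ... r_i). Equal
   hyperparameters give equal BD-metrics for every sample. *)

lemma prod_lessThan_add:
  fixes f :: "nat \<Rightarrow> 'a::comm_monoid_mult"
  shows "(\<Prod>t<m + p. f t) = (\<Prod>t<m. f t) * (\<Prod>j<p. f (m + j))"
  by (induction p) (simp_all add: mult.assoc)

lemma card_lists_nth_less:
  "card {xs. length xs = m \<and> (\<forall>j<m. xs ! j < f j)} = (\<Prod>j<m. f j)"
proof (induction m arbitrary: f)
  case 0
  then show ?case by simp
next
  case (Suc m)
  have "{xs. length xs = Suc m \<and> (\<forall>j<Suc m. xs ! j < f j)}
      = (\<lambda>(x, xs). x # xs) ` ({..<f 0} \<times> {xs. length xs = m \<and> (\<forall>j<m. xs ! j < f (Suc j))})"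
    by (auto simp: length_Suc_conv All_less_Suc2 image_iff)
  then show ?case
    using Suc.IH[of "\<lambda>j. f (Suc j)"]
    by (simp add: card_image inj_on_def card_cartesian_product prod.lessThan_Suc_shift
        del: prod.lessThan_Suc)
qed

lemma bd_metric_cong:
  assumes "\<And>U k. U \<in> Us \<Longrightarrow> k \<in> labs U \<Longrightarrow> a U k = b U k"
  shows "bd_metric Us labs a cnt = bd_metric Us labs b cnt"
  unfolding bd_metric_def using assms by (intro prod.cong sum.cong arg_cong2[where f = "(*)"]) simp_all

lemma append_in_nodes_iff:
  "ys @ zs \<in> nodes r n \<longleftrightarrow>
     ys \<in> nodes r n \<and> length ys + length zs \<le> n \<and> (\<forall>j<length zs. zs ! j < r (length ys + j))"
proof -
  have "(\<forall>j<length ys + length zs. (ys @ zs) ! j < r j)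
      \<longleftrightarrow> (\<forall>j<length ys. ys ! j < r j) \<and> (\<forall>j<length zs. zs ! j < r (length ys + j))"
  proof (intro iffI conjI allI impI)
    fix j assume "\<forall>j<length ys + length zs. (ys @ zs) ! j < r j"
    then show "j < length ys \<Longrightarrow> ys ! j < r j" and "j < length zs \<Longrightarrow> zs ! j < r (length ys + j)"
      by (auto simp: nth_append dest: spec[of _ j] spec[of _ "length ys + j"])
  next
    fix j assume "(\<forall>j<length ys. ys ! j < r j) \<and> (\<forall>j<length zs. zs ! j < r (length ys + j))"
      and "j < length ys + length zs"
    then show "(ys @ zs) ! j < r j"
      by (cases "j < length ys") (auto simp: nth_append dest: spec[of _ "j - length ys"])
  qed
  then show ?thesis by (auto simp: nodes_def)
qed

lemma append_singleton_in_nodes_iff: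
  "xs @ [k] \<in> nodes r n \<longleftrightarrow> xs \<in> nodes r n \<and> length xs < n \<and> k < r (length xs)"
  by (simp add: append_in_nodes_iff Suc_le_eq)

lemma finite_nodes: "finite (nodes r n)"
proof (rule finite_subset)
  show "nodes r n \<subseteq> {xs. set xs \<subseteq> {..<\<Sum>j<n. r j} \<and> length xs \<le> n}"
  proof (clarsimp simp: nodes_def in_set_conv_nth)
    fix xs j assume "length xs \<le> n" "\<forall>j<length xs. xs ! j < r j" "j < length xs"
    moreover have "r j \<le> (\<Sum>j<n. r j)"
      using \<open>length xs \<le> n\<close> \<open>j < length xs\<close> by (intro member_le_sum) auto
    ultimately show "xs ! j < (\<Sum>j<n. r j)" by fastforce
  qed
qed (rule finite_lists_length_le, simp)

lemma stage_of_nodesD: "s \<in> stage_of r n st xs \<Longrightarrow> s \<in> nodes r n"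
  by (auto simp: stage_of_def situations_def)

lemma finite_stage_of: "finite (stage_of r n st xs)"
  using finite_nodes by (rule rev_finite_subset) (auto dest: stage_of_nodesD)

context
  fixes r :: "nat \<Rightarrow> nat" and n :: nat
  assumes r_pos: "\<forall>i<n. 0 < r i"
begin

lemma situations_eq: "situations r n = {xs \<in> nodes r n. length xs < n}"
  using r_pos by (auto simp: situations_def append_singleton_in_nodes_iff)

lemma leaves_eq: "leaves r n = {xs \<in> nodes r n. length xs = n}"
  by (auto simp: leaves_def situations_eq nodes_def)

lemma prod_r_pos: "m \<le> n \<Longrightarrow> 0 < (\<Prod>t<m. r t)"
  using r_pos by (intro prod_pos) auto

lemma leaves_through_eq:
  assumes "ys \<in> nodes r n"
  shows "{l \<in> leaves r n. prefix ys l}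
       = (@) ys ` {zs. length zs = n - length ys \<and> (\<forall>j<n - length ys. zs ! j < r (length ys + j))}"
proof -
  have "length ys \<le> n" using assms by (simp add: nodes_def)
  then show ?thesis
    using assms by (auto simp: leaves_eq prefix_def append_in_nodes_iff)
qed

lemma npaths_through_eq:
  assumes "ys \<in> nodes r n"
  shows "npaths_through r n ys = (\<Prod>j<n - length ys. r (length ys + j))"
  unfolding npaths_through_def leaves_through_eq[OF assms]
  by (simp add: card_image inj_on_def card_lists_nth_less)

lemma card_leaves: "card (leaves r n) = (\<Prod>t<n. r t)"
  using npaths_through_eq[of "[]"] by (simp add: npaths_through_def nodes_def)

lemma card_leaves_eq_prod_npaths_through:
  assumes "ys \<in> nodes r n"
  shows "card (leaves r n) = (\<Prod>t<length ys. r t) * npaths_through r n ys"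
proof -
  have "length ys \<le> n" using assms by (simp add: nodes_def)
  then have "card (leaves r n) = (\<Prod>t<length ys + (n - length ys). r t)"
    by (simp add: card_leaves)
  also have "\<dots> = (\<Prod>t<length ys. r t) * npaths_through r n ys"
    unfolding prod_lessThan_add npaths_through_eq[OF assms] ..
  finally show ?thesis .
qed

context
  fixes st :: "nat list \<Rightarrow> 's"
  assumes single_level: "single_level_stages r n st"
begin

lemma length_stage_of:
  "xs \<in> situations r n \<Longrightarrow> s \<in> stage_of r n st xs \<Longrightarrow> length s = length xs"
  using single_level unfolding single_level_stages_def stage_of_def by blast

lemma card_stage_of_pos: "xs \<in> situations r n \<Longrightarrow> 0 < card (stage_of r n st xs)"
  using finite_stage_of[of r n st xs] by (auto simp: card_gt_0_iff stage_of_def)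

lemma stage_labels_stage_of:
  assumes "xs \<in> situations r n"
  shows "stage_labels r n (stage_of r n st xs) = {..<r (length xs)}"
proof (intro set_eqI iffI)
  fix k assume "k \<in> stage_labels r n (stage_of r n st xs)"
  then obtain s where "s \<in> stage_of r n st xs" "s @ [k] \<in> nodes r n"
    by (auto simp: stage_labels_def)
  then show "k \<in> {..<r (length xs)}"
    using length_stage_of[OF assms] by (auto simp: append_singleton_in_nodes_iff)
next
  fix k assume "k \<in> {..<r (length xs)}"
  then have "xs @ [k] \<in> nodes r n"
    using assms by (simp add: situations_eq append_singleton_in_nodes_iff)
  moreover have "xs \<in> stage_of r n st xs" using assms by (simp add: stage_of_def)
  ultimately show "k \<in> stage_labels r n (stage_of r n st xs)"
    by (auto simp: stage_labels_def)
qed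

lemma cs_lvl_eq:
  "ys \<in> nodes r n \<Longrightarrow> length ys = i \<Longrightarrow> cs_lvl \<alpha> r n st i ys = \<alpha> / (\<Prod>t<i. r t)"
proof (induction i arbitrary: ys)
  case 0
  then show ?case by simp
next
  case (Suc i)
  obtain xs k where ys: "ys = xs @ [k]" and "length xs = i"
    using Suc.prems(2) by (auto simp: length_Suc_conv_rev)
  let ?U = "stage_of r n st xs"
  have xs: "xs \<in> situations r n" and "i < n"
    using Suc.prems \<open>length xs = i\<close> by (auto simp: ys situations_eq append_singleton_in_nodes_iff)
  have "cs_lvl \<alpha> r n st i s = \<alpha> / (\<Prod>t<i. r t)" if "s \<in> ?U" for s
    using Suc.IH that stage_of_nodesD length_stage_of[OF xs] \<open>length xs = i\<close>
    by blast
  then have "(\<Sum>s\<in>?U. cs_lvl \<alpha> r n st i s) = card ?U * (\<alpha> / (\<Prod>t<i. r t))"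
    by simp
  moreover have "0 < card ?U" "0 < r i" "0 < (\<Prod>t<i. r t)"
    using card_stage_of_pos[OF xs] r_pos prod_r_pos \<open>i < n\<close> by auto
  ultimately show ?case
    using \<open>length xs = i\<close> by (simp add: ys stage_labels_stage_of[OF xs])
qed

lemma cs_in_eq: "ys \<in> nodes r n \<Longrightarrow> cs_in \<alpha> r n st ys = \<alpha> / (\<Prod>t<length ys. r t)"
  by (simp add: cs_in_def cs_lvl_eq)

lemma cs_dot_stage_of:
  assumes "xs \<in> situations r n"
  shows "cs_dot \<alpha> r n st (stage_of r n st xs)
       = \<alpha> * card (stage_of r n st xs) / (\<Prod>t<length xs. r t)"
proof -
  have "cs_in \<alpha> r n st s = \<alpha> / (\<Prod>t<length xs. r t)" if "s \<in> stage_of r n st xs" for s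
    using that by (simp add: cs_in_eq stage_of_nodesD length_stage_of[OF assms])
  then show ?thesis by (simp add: cs_dot_def)
qed

lemma cs_hyp_stage_of:
  assumes "xs \<in> situations r n"
  shows "cs_hyp \<alpha> r n st (stage_of r n st xs) k
       = \<alpha> * card (stage_of r n st xs) / (\<Prod>t\<le>length xs. r t)"
  using assms by (simp add: cs_hyp_def cs_dot_stage_of stage_labels_stage_of
      flip: lessThan_Suc_atMost)

lemma bdepu_hyp_stage_of:
  assumes "xs \<in> situations r n" and "k < r (length xs)"
  shows "bdepu_hyp \<alpha> r n (stage_of r n st xs) k
       = \<alpha> * card (stage_of r n st xs) / (\<Prod>t\<le>length xs. r t)"
proof -
  let ?U = "stage_of r n st xs" and ?P = "\<Prod>t<Suc (length xs). r t"
  have "real (npaths_through r n (s @ [k])) = card (leaves r n) / ?P" if "s \<in> ?U" for s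
  proof -
    have "s @ [k] \<in> nodes r n" "length s = length xs"
      using that assms stage_of_nodesD length_stage_of[OF assms(1)]
      by (auto simp: situations_eq append_singleton_in_nodes_iff)
    moreover have "0 < ?P" using assms by (intro prod_r_pos) (simp add: situations_eq)
    ultimately show ?thesis
      by (simp add: card_leaves_eq_prod_npaths_through field_simps)
  qed
  moreover have "0 < card (leaves r n)"
    using prod_r_pos[of n] by (simp add: card_leaves)
  ultimately show ?thesis
    by (simp add: bdepu_hyp_def flip: lessThan_Suc_atMost)
qed

lemma sum_bdepu_hyp_stage_of:
  assumes "xs \<in> situations r n"
  shows "(\<Sum>k\<in>stage_labels r n (stage_of r n st xs). bdepu_hyp \<alpha> r n (stage_of r n st xs) k)
       = \<alpha> * card (stage_of r n st xs) / (\<Prod>t<length xs. r t)"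
proof -
  have "0 < r (length xs)" using assms r_pos by (simp add: situations_eq)
  then show ?thesis
    using assms by (simp add: stage_labels_stage_of bdepu_hyp_stage_of flip: lessThan_Suc_atMost)
qed

lemma cs_bdeu_score_eq_bdepu_score: "cs_bdeu_score \<alpha> r n st D = bdepu_score \<alpha> r n st D"
  unfolding cs_bdeu_score_def bdepu_score_def
  by (rule bd_metric_cong)
    (auto simp: stages_def stage_labels_stage_of cs_hyp_stage_of bdepu_hyp_stage_of)

end

end

theorem mainTheorem5:
  fixes \<alpha> :: real and r :: "nat \<Rightarrow> nat" and n :: nat and st :: "nat list \<Rightarrow> 's"
  assumes r_pos: "\<forall>i<n. 0 < r i"
    and single_level: "single_level_stages r n st"
    and alpha_pos: "0 < \<alpha>"
  shows "(\<forall>xs\<in>situations r n. \<forall>k<r (length xs).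
            cs_hyp \<alpha> r n st (stage_of r n st xs) k = bdepu_hyp \<alpha> r n (stage_of r n st xs) k
          \<and> cs_hyp \<alpha> r n st (stage_of r n st xs) k
              = \<alpha> * real (card (stage_of r n st xs)) / real (\<Prod>t\<le>length xs. r t))
       \<and> (\<forall>xs\<in>situations r n.
            cs_dot \<alpha> r n st (stage_of r n st xs)
              = \<alpha> * real (card (stage_of r n st xs)) / real (\<Prod>t<length xs. r t)
          \<and> (\<Sum>k\<in>stage_labels r n (stage_of r n st xs). bdepu_hyp \<alpha> r n (stage_of r n st xs) k)
              = \<alpha> * real (card (stage_of r n st xs)) / real (\<Prod>t<length xs. r t))
       \<and> (\<forall>D. set D \<subseteq> leaves r n \<longrightarrow> cs_bdeu_score \<alpha> r n st D = bdepu_score \<alpha> r n st D)"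
proof -
  note stage_hyps = cs_dot_stage_of[OF r_pos single_level] cs_hyp_stage_of[OF r_pos single_level]
    bdepu_hyp_stage_of[OF r_pos single_level] sum_bdepu_hyp_stage_of[OF r_pos single_level]
  show ?thesis
    using stage_hyps cs_bdeu_score_eq_bdepu_score[OF r_pos single_level] by simp
qed

end
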